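(* For any set $\mathcal{O}$ of upwards closed modalities, the logical preorder $\sqsubseteq_{\mathcal{V}^+}$ (on closed values and on closed computations of each type) is identical to applicative $\mathcal{O}$-similarity.
   Context: Language: types $\tau ::= \mathbf{1} \mid \mathbf{N} \mid \tau \to \tau'$; signature $\Sigma$ of effect operations with arities $\alpha^n\to\alpha$, $\mathbf{N}\times\alpha^n\to\alpha$, $\alpha^{\mathbf{N}}\to\alpha$ or $\mathbf{N}\times\alpha^{\mathbf{N}}\to\alpha$. Values $V ::= * \mid Z \mid S(V) \mid \lambda x{:}\tau.M \mid x$; computations $M ::= VW \mid \mathbf{return}\,V \mid \mathbf{let}\ M\Rightarrow x\ \mathbf{in}\ N \mid \mathbf{fix}(V) \mid \mathbf{case}\ V\ \mathbf{of}\ \{Z\Rightarrow M; S(x)\Rightarrow N\} \mid \sigma(M_0,\dots) \mid \sigma(V;M_0,\dots) \mid \sigma(V)\mid\sigma(V;W)$, simply typed call-by-value. $\mathit{Val}(\tau)$, $\mathit{Com}(\tau)$: closed values/computations; $\overline{n}=S^n(Z)$. Effect trees $TX$: possibly infinite trees with leaves $\bot$ or elements of $X$ and internal nodes labelled by effect operations $\sigma$ (or $\sigma_m$, $m\in\mathbb{N}$, for arities with a $\mathbf{N}$ parameter) with $n$ or $\mathbb{N}$-many children according to the arity; $t\le t'$ iff $t$ results from $t'$ by replacing subtrees with $\bot$. Each $M\in\mathit{Com}(\tau)$ has an operational effect tree $|M|\in T(\mathit{Val}(\tau))$ from call-by-value evaluation (leaves = returned values, nodes = effect operations encountered, $\bot$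 = divergence). Modalities: set $\mathcal{O}$, each $o$ with $[\![o]\!]\subseteq T\mathbf{1}$; for $t\in TX$, $P\subseteq X$, $t[\in P]\in T\mathbf{1}$ replaces leaves in $P$ by $*$ and other $X$-leaves by $\bot$; $o(A)=\{t\mid t[\in A]\in[\![o]\!]\}$. Upwards closed: $[\![o]\!]$ upward closed under $\le$. Logic $\mathcal{V}^+$: value formulas $VF(\tau)$ and computation formulas $CF(\tau)$: $\{n\}\in VF(\mathbf{N})$; $(V\mapsto\Phi)\in VF(\tau\to\tau')$ for $V\in\mathit{Val}(\tau)$, $\Phi\in CF(\tau')$; $o\,\phi\in CF(\tau)$ for $o\in\mathcal{O}$, $\phi\in VF(\tau)$; closed under arbitrary $\bigwedge,\bigvee$ (no negation). Semantics: $W\models\{n\}$ iff $W=\overline{n}$; $W\models(V\mapsto\Phi)$ iff $WV\models\Phi$; $M\models o\phi$ iff $|M|[\in\{V\mid V\models\phi\}]\in[\![o]\!]$. $V\sqsubseteq_{\mathcal{V}^+}W$ iff all formulas satisfied by $V$ are satisfied by $W$ (similarly for computations). Relator: for $R\subseteq X\times Y$ and $A\subseteq X$, $R[A]=\{y\mid\exists x\in A,\ xRy\}$; $t\,\mathcal{O}(R)\,t'$ iff $\forall A\subseteq X\ \forall o\in\mathcal{O}$, $t\in o(A)\Rightarrow t'\in o(R[A])$. An applicative $\mathcal{O}$-simulation is a family $R^v_\tau\subseteq\mathit{Val}(\tau)^2$, $R^c_\tau\subseteq\mathit{Com}(\tau)^2$ with: (1) $V R^v_{\mathbf{N}} W\Rightarrow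 V=W$; (2) $M R^c_\tau N\Rightarrow |M|\,\mathcal{O}(R^v_\tau)\,|N|$; (3) $V R^v_{\tau'\to\tau} W\Rightarrow \forall U\in\mathit{Val}(\tau')$, $VU\,R^c_\tau\,WU$. Applicative $\mathcal{O}$-similarity is the union of all applicative $\mathcal{O}$-simulations. *)

theory Defs
  imports Main
begin

datatype ty = TUnit | TNat | TArr ty ty

text \<open>Arities: alpha^n -> alpha, N x alpha^n -> alpha, alpha^N -> alpha, N x alpha^N -> alpha.\<close>
datatype arity = AFin nat | APFin nat | AInf | APInf

datatype 'o val =
    Star
  | Zero
  | Succ "'o val"
  | Lam ty "'o comp"           \<comment> \<open>binds de Bruijn index 0 in the body\<close>
  | Var nat
and 'o comp =
    App "'o val" "'o val"
  | Ret "'o val"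
  | Let "'o comp" "'o comp"    \<comment> \<open>let M => x in N; x bound in N\<close>
  | Fix ty "'o val"            \<comment> \<open>fix(V), annotated with the argument type rho\<close>
  | Case "'o val" "'o comp" "'o comp"  \<comment> \<open>case V of Z => M; S(x) => N; x bound in N\<close>
  | OpF 'o "'o comp list"
  | OpPF 'o "'o val" "'o comp list"
  | OpI 'o "'o val"
  | OpPI 'o "'o val" "'o val"

primrec num :: "nat \<Rightarrow> 'o val" where
  "num 0 = Zero"
| "num (Suc n) = Succ (num n)"

fun nat_of :: "'o val \<Rightarrow> nat" where
  "nat_of Zero = 0"
| "nat_of (Succ v) = Suc (nat_of v)"
| "nat_of _ = 0"

inductive vtyp :: "('o \<Rightarrow> arity) \<Rightarrow> ty list \<Rightarrow> 'o val \<Rightarrow> ty \<Rightarrow> bool"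
  and ctyp :: "('o \<Rightarrow> arity) \<Rightarrow> ty list \<Rightarrow> 'o comp \<Rightarrow> ty \<Rightarrow> bool"
  for ar :: "'o \<Rightarrow> arity" where
  "vtyp ar G Star TUnit"
| "vtyp ar G Zero TNat"
| "vtyp ar G V TNat \<Longrightarrow> vtyp ar G (Succ V) TNat"
| "ctyp ar (t # G) M t' \<Longrightarrow> vtyp ar G (Lam t M) (TArr t t')"
| "i < length G \<Longrightarrow> vtyp ar G (Var i) (G ! i)"
| "vtyp ar G V (TArr t t') \<Longrightarrow> vtyp ar G W t \<Longrightarrow> ctyp ar G (App V W) t'"
| "vtyp ar G V t \<Longrightarrow> ctyp ar G (Ret V) t"
| "ctyp ar G M t \<Longrightarrow> ctyp ar (t # G) N t' \<Longrightarrow> ctyp ar G (Let M N) t'"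
| "vtyp ar G V (TArr (TArr r t) (TArr r t)) \<Longrightarrow> ctyp ar G (Fix r V) (TArr r t)"
| "vtyp ar G V TNat \<Longrightarrow> ctyp ar G M t \<Longrightarrow> ctyp ar (TNat # G) N t \<Longrightarrow> ctyp ar G (Case V M N) t"
| "ar s = AFin n \<Longrightarrow> length Ms = n \<Longrightarrow> (\<forall>M\<in>set Ms. ctyp ar G M t) \<Longrightarrow> ctyp ar G (OpF s Ms) t"
| "ar s = APFin n \<Longrightarrow> vtyp ar G V TNat \<Longrightarrow> length Ms = n \<Longrightarrow> (\<forall>M\<in>set Ms. ctyp ar G M t)
     \<Longrightarrow> ctyp ar G (OpPF s V Ms) t"
| "ar s = AInf \<Longrightarrow> vtyp ar G V (TArr TNat t) \<Longrightarrow> ctyp ar G (OpI s V) t"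
| "ar s = APInf \<Longrightarrow> vtyp ar G V TNat \<Longrightarrow> vtyp ar G W (TArr TNat t) \<Longrightarrow> ctyp ar G (OpPI s V W) t"

definition Val :: "('o \<Rightarrow> arity) \<Rightarrow> ty \<Rightarrow> 'o val set" where
  "Val ar t = {V. vtyp ar [] V t}"

definition Com :: "('o \<Rightarrow> arity) \<Rightarrow> ty \<Rightarrow> 'o comp set" where
  "Com ar t = {M. ctyp ar [] M t}"

section \<open>Substitution of a closed value and the stack machine\<close>

primrec substv :: "nat \<Rightarrow> 'o val \<Rightarrow> 'o val \<Rightarrow> 'o val"
  and substc :: "nat \<Rightarrow> 'o val \<Rightarrow> 'o comp \<Rightarrow> 'o comp" where
  "substv k U Star = Star"
| "substv k U Zero = Zero"
| "substv k U (Succ V) = Succ (substv k U V)"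
| "substv k U (Lam t M) = Lam t (substc (Suc k) U M)"
| "substv k U (Var i) = (if i = k then U else if k < i then Var (i - 1) else Var i)"
| "substc k U (App V W) = App (substv k U V) (substv k U W)"
| "substc k U (Ret V) = Ret (substv k U V)"
| "substc k U (Let M N) = Let (substc k U M) (substc (Suc k) U N)"
| "substc k U (Fix t V) = Fix t (substv k U V)"
| "substc k U (Case V M N) = Case (substv k U V) (substc k U M) (substc (Suc k) U N)"
| "substc k U (OpF s Ms) = OpF s (map (substc k U) Ms)"
| "substc k U (OpPF s V Ms) = OpPF s (substv k U V) (map (substc k U) Ms)"
| "substc k U (OpI s V) = OpI s (substv k U V)"
| "substc k U (OpPI s V W) = OpPI s (substv k U V) (substv k U W)"

type_synonym 'o conf = "'o comp list \<times> 'o comp"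

fun step :: "'o conf \<Rightarrow> 'o conf option" where
  "step (S, App (Lam t M) V) = Some (S, substc 0 V M)"
| "step (S, Let M N) = Some (N # S, M)"
| "step (N # S, Ret V) = Some (S, substc 0 V N)"
| "step (S, Fix r V) = Some (S, App V (Lam r (Let (Fix r V) (App (Var 0) (Var 1)))))"
| "step (S, Case Zero M N) = Some (S, M)"
| "step (S, Case (Succ V) M N) = Some (S, substc 0 V N)"
| "step _ = None"

definition reach :: "'o conf \<Rightarrow> 'o conf \<Rightarrow> bool" where
  "reach = (\<lambda>c c'. step c = Some c')\<^sup>*\<^sup>*"

definition terminates :: "'o conf \<Rightarrow> bool" where
  "terminates c = (\<exists>c'. reach c c' \<and> step c' = None)"

definition final :: "'o conf \<Rightarrow> 'o conf" where
  "final c = (SOME c'. reach c c' \<and> step c' = None)"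

text \<open>Leaves Bot or Leaf x; nodes labelled by an operation and a parameter m
  (0 for operations without N-parameter), with a finite list or an N-indexed family of children.\<close>
codatatype ('o, 'a) etree =
    Bot
  | Leaf 'a
  | Node 'o nat "('o, 'a) etree list"
  | NodeI 'o nat "nat \<Rightarrow> ('o, 'a) etree"

coinductive wft :: "('o \<Rightarrow> arity) \<Rightarrow> ('o, 'a) etree \<Rightarrow> bool" for ar where
  "wft ar Bot"
| "wft ar (Leaf x)"
| "ar s = AFin n \<Longrightarrow> length ts = n \<Longrightarrow> (\<forall>t\<in>set ts. wft ar t) \<Longrightarrow> wft ar (Node s 0 ts)"
| "ar s = APFin n \<Longrightarrow> length ts = n \<Longrightarrow> (\<forall>t\<in>set ts. wft ar t) \<Longrightarrow> wft ar (Node s m ts)"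
| "ar s = AInf \<Longrightarrow> (\<forall>i. wft ar (f i)) \<Longrightarrow> wft ar (NodeI s 0 f)"
| "ar s = APInf \<Longrightarrow> (\<forall>i. wft ar (f i)) \<Longrightarrow> wft ar (NodeI s m f)"

text \<open>t \<le> t' iff t results from t' by replacing (possibly infinitely many) subtrees by Bot.\<close>
coinductive tle :: "('o, 'a) etree \<Rightarrow> ('o, 'a) etree \<Rightarrow> bool" where
  "tle Bot t"
| "tle (Leaf x) (Leaf x)"
| "list_all2 tle ts us \<Longrightarrow> tle (Node s m ts) (Node s m us)"
| "(\<forall>i. tle (f i) (g i)) \<Longrightarrow> tle (NodeI s m f) (NodeI s m g)"

primcorec restr :: "'a set \<Rightarrow> ('o, 'a) etree \<Rightarrow> ('o, unit) etree" where
  "restr P t = (case t of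
       Bot \<Rightarrow> Bot
     | Leaf x \<Rightarrow> (if x \<in> P then Leaf () else Bot)
     | Node s m ts \<Rightarrow> Node s m (map (restr P) ts)
     | NodeI s m f \<Rightarrow> NodeI s m (\<lambda>i. restr P (f i)))"

text \<open>Observation of the terminal configuration reached (if any) by the stack machine.\<close>
datatype (discs_sels) 'o obs =
    OBot
  | OLeaf "'o val"
  | ONode 'o nat "'o conf list"
  | ONodeI 'o nat "nat \<Rightarrow> 'o conf"

fun obs_of_final :: "'o conf \<Rightarrow> 'o obs" where
  "obs_of_final ([], Ret V) = OLeaf V"
| "obs_of_final (S, OpF s Ms) = ONode s 0 (map (\<lambda>N. (S, N)) Ms)"
| "obs_of_final (S, OpPF s V Ms) = ONode s (nat_of V) (map (\<lambda>N. (S, N)) Ms)"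
| "obs_of_final (S, OpI s V) = ONodeI s 0 (\<lambda>i. (S, App V (num i)))"
| "obs_of_final (S, OpPI s V W) = ONodeI s (nat_of V) (\<lambda>i. (S, App W (num i)))"
| "obs_of_final _ = OBot"

definition observe :: "'o conf \<Rightarrow> 'o obs" where
  "observe c = (if terminates c then obs_of_final (final c) else OBot)"

primcorec ctree :: "'o conf \<Rightarrow> ('o, 'o val) etree" where
  "ctree c = (case observe c of
       OBot \<Rightarrow> Bot
     | OLeaf V \<Rightarrow> Leaf V
     | ONode s m cs \<Rightarrow> Node s m (map ctree cs)
     | ONodeI s m f \<Rightarrow> NodeI s m (\<lambda>i. ctree (f i)))"

definition optree :: "'o comp \<Rightarrow> ('o, 'o val) etree" where
  "optree M = ctree ([], M)"

definition upclosed_modality :: "('o \<Rightarrow> arity) \<Rightarrow> ('o, unit) etree set \<Rightarrow> bool" where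
  "upclosed_modality ar mo \<longleftrightarrow> mo \<subseteq> {t. wft ar t} \<and>
     (\<forall>t t'. t \<in> mo \<longrightarrow> tle t t' \<longrightarrow> wft ar t' \<longrightarrow> t' \<in> mo)"

definition modal :: "('o, unit) etree set \<Rightarrow> 'a set \<Rightarrow> ('o, 'a) etree set" where
  "modal mo A = {t. restr A t \<in> mo}"

section \<open>The logic V+ (formulas represented by their denotations)\<close>

inductive isVF :: "('o \<Rightarrow> arity) \<Rightarrow> ('o, unit) etree set set \<Rightarrow> ty \<Rightarrow> 'o val set \<Rightarrow> bool"
  and isCF :: "('o \<Rightarrow> arity) \<Rightarrow> ('o, unit) etree set set \<Rightarrow> ty \<Rightarrow> 'o comp set \<Rightarrow> bool"
  for ar Mods where
  VF_num: "isVF ar Mods TNat {num n}"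
| VF_app: "V \<in> Val ar t \<Longrightarrow> isCF ar Mods t' Phi \<Longrightarrow>
     isVF ar Mods (TArr t t') {W \<in> Val ar (TArr t t'). App W V \<in> Phi}"
| VF_and: "(\<forall>X\<in>F. isVF ar Mods t X) \<Longrightarrow> isVF ar Mods t (Val ar t \<inter> \<Inter>F)"
| VF_or: "(\<forall>X\<in>F. isVF ar Mods t X) \<Longrightarrow> isVF ar Mods t (\<Union>F)"
| CF_mod: "mo \<in> Mods \<Longrightarrow> isVF ar Mods t phi \<Longrightarrow> isCF ar Mods t {M \<in> Com ar t. optree M \<in> modal mo phi}"
| CF_and: "(\<forall>X\<in>F. isCF ar Mods t X) \<Longrightarrow> isCF ar Mods t (Com ar t \<inter> \<Inter>F)"
| CF_or: "(\<forall>X\<in>F. isCF ar Mods t X) \<Longrightarrow> isCF ar Mods t (\<Union>F)"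

definition log_vle :: "('o \<Rightarrow> arity) \<Rightarrow> ('o, unit) etree set set \<Rightarrow> ty \<Rightarrow> 'o val \<Rightarrow> 'o val \<Rightarrow> bool" where
  "log_vle ar Mods t V W \<longleftrightarrow> (\<forall>X. isVF ar Mods t X \<longrightarrow> V \<in> X \<longrightarrow> W \<in> X)"

definition log_cle :: "('o \<Rightarrow> arity) \<Rightarrow> ('o, unit) etree set set \<Rightarrow> ty \<Rightarrow> 'o comp \<Rightarrow> 'o comp \<Rightarrow> bool" where
  "log_cle ar Mods t M N \<longleftrightarrow> (\<forall>X. isCF ar Mods t X \<longrightarrow> M \<in> X \<longrightarrow> N \<in> X)"

definition relator :: "('o, unit) etree set set \<Rightarrow> 'a set \<Rightarrow> ('a \<times> 'a) set \<Rightarrow>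
    ('o, 'a) etree \<Rightarrow> ('o, 'a) etree \<Rightarrow> bool" where
  "relator Mods X R t t' \<longleftrightarrow> (\<forall>A. A \<subseteq> X \<longrightarrow> (\<forall>mo\<in>Mods. t \<in> modal mo A \<longrightarrow> t' \<in> modal mo (R `` A)))"

definition app_sim :: "('o \<Rightarrow> arity) \<Rightarrow> ('o, unit) etree set set \<Rightarrow>
    (ty \<Rightarrow> ('o val \<times> 'o val) set) \<Rightarrow> (ty \<Rightarrow> ('o comp \<times> 'o comp) set) \<Rightarrow> bool" where
  "app_sim ar Mods Rv Rc \<longleftrightarrow>
     (\<forall>t. Rv t \<subseteq> Val ar t \<times> Val ar t \<and> Rc t \<subseteq> Com ar t \<times> Com ar t) \<and>
     (\<forall>V W. (V, W) \<in> Rv TNat \<longrightarrow> V = W) \<and>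
     (\<forall>t M N. (M, N) \<in> Rc t \<longrightarrow> relator Mods (Val ar t) (Rv t) (optree M) (optree N)) \<and>
     (\<forall>t' t V W. (V, W) \<in> Rv (TArr t' t) \<longrightarrow> (\<forall>U\<in>Val ar t'. (App V U, App W U) \<in> Rc t))"

definition vsim :: "('o \<Rightarrow> arity) \<Rightarrow> ('o, unit) etree set set \<Rightarrow> ty \<Rightarrow> 'o val \<Rightarrow> 'o val \<Rightarrow> bool" where
  "vsim ar Mods t V W \<longleftrightarrow> (\<exists>Rv Rc. app_sim ar Mods Rv Rc \<and> (V, W) \<in> Rv t)"

definition csim :: "('o \<Rightarrow> arity) \<Rightarrow> ('o, unit) etree set set \<Rightarrow> ty \<Rightarrow> 'o comp \<Rightarrow> 'o comp \<Rightarrow> bool" where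
  "csim ar Mods t M N \<longleftrightarrow> (\<exists>Rv Rc. app_sim ar Mods Rv Rc \<and> (M, N) \<in> Rc t)"

end

theory Submission
  imports Defs
begin

text \<open>An applicative simulation \<open>R\<close> maps the extension of every formula into itself.
  This is an induction on formulas whose only real case is a modal formula \<open>o \<phi>\<close>: the relator
  sends \<open>|M| \<in> o(\<phi>)\<close> to \<open>|N| \<in> o(R[\<phi>])\<close>, and \<open>R[\<phi>] \<subseteq> \<phi>\<close> by the induction hypothesis, while upward
  closure of \<open>o\<close> makes \<open>A \<mapsto> o(A)\<close> monotone. Hence similarity is contained in the logical
  preorder.

  Conversely the logical preorder is itself an applicative simulation. For its relator clause,
  the up-set \<open>R[A]\<close> of any set \<open>A\<close> of values is definable, as the disjunction over \<open>V \<in> A\<close>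
  of the conjunction of all formulas satisfied by \<open>V\<close>; so \<open>o(R[A])\<close> is a computation formula,
  which \<open>M\<close> satisfies by monotonicity and which \<open>N\<close> then inherits.\<close>

lemma restr_simps [simp]:
  "restr A Bot = Bot"
  "restr A (Leaf x) = (if x \<in> A then Leaf () else Bot)"
  "restr A (Node s m ts) = Node s m (map (restr A) ts)"
  "restr A (NodeI s m f) = NodeI s m (\<lambda>i. restr A (f i))"
  by (subst restr.code; simp)+

lemma tle_restr_mono:
  assumes "A \<subseteq> B"
  shows "tle (restr A t) (restr B t)"
proof (coinduction arbitrary: t rule: tle.coinduct)
  case (tle t)
  then show ?case
    using assms by (cases t) (auto simp: list_all2_map1 list_all2_map2 intro!: list_all2_refl)
qed

lemma wft_restr:
  assumes "wft ar (restr A t)"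
  shows "wft ar (restr B t)"
  using assms
proof (coinduction arbitrary: t rule: wft.coinduct)
  case (wft t)
  then show ?case
    by (cases t) (auto elim!: wft.cases)
qed

text \<open>Restricting to a larger set cuts fewer leaves to \<open>Bot\<close>, giving a larger tree
  of the same shape.\<close>
lemma modal_mono:
  assumes "upclosed_modality ar mo" and "A \<subseteq> B" and "t \<in> modal mo A"
  shows "t \<in> modal mo B"
proof -
  have "restr A t \<in> mo"
    using assms(3) by (simp add: modal_def)
  moreover have "wft ar (restr B t)"
    using calculation assms(1) by (auto simp: upclosed_modality_def intro: wft_restr)
  ultimately show ?thesis
    using assms(1) tle_restr_mono[OF assms(2)] by (auto simp: upclosed_modality_def modal_def)
qed

inductive_cases vtyp_TNatE: "vtyp ar G V TNat"

lemma Val_TNat_num: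
  assumes "V \<in> Val ar TNat"
  shows "\<exists>n. V = num n"
  using assms unfolding Val_def
proof (induction V)
  case (Succ V)
  then obtain n where "V = num n"
    by (auto elim: vtyp_TNatE)
  then have "Succ V = num (Suc n)"
    by simp
  then show ?case ..
qed (auto elim: vtyp_TNatE intro: exI[of _ 0])

lemma vtyp_num: "vtyp ar G (num n) TNat"
  by (induction n) (simp_all add: vtyp_ctyp.intros(2,3))

lemma isVF_subset_Val: "isVF ar Mods t X \<Longrightarrow> X \<subseteq> Val ar t"
  and isCF_subset_Com: "isCF ar Mods t Y \<Longrightarrow> Y \<subseteq> Com ar t"
  by (induction rule: isVF_isCF.inducts) (auto simp: Val_def vtyp_num)

lemma isVF_app_sim_closed:
  assumes sim: "app_sim ar Mods Rv Rc" and up: "\<forall>mo\<in>Mods. upclosed_modality ar mo"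
  shows "isVF ar Mods t X \<Longrightarrow> V \<in> X \<Longrightarrow> (V, W) \<in> Rv t \<Longrightarrow> W \<in> X"
    and isCF_app_sim_closed:
      "isCF ar Mods t Y \<Longrightarrow> M \<in> Y \<Longrightarrow> (M, N) \<in> Rc t \<Longrightarrow> N \<in> Y"
proof (induction arbitrary: V W and M N rule: isVF_isCF.inducts)
  case (VF_num n)
  then show ?case
    using sim unfolding app_sim_def by auto
next
  case (VF_app U t t' Phi)
  then show ?case
    using sim unfolding app_sim_def by blast
next
  case (VF_and F t)
  then show ?case
    using sim unfolding app_sim_def by blast
next
  case (VF_or F t)
  then show ?case
    by blast
next
  case (CF_mod mo t phi)
  have rel: "relator Mods (Val ar t) (Rv t) (optree M) (optree N)" and N: "N \<in> Com ar t"
    using CF_mod.prems(2) sim unfolding app_sim_def by blast+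
  have "phi \<subseteq> Val ar t"
    using \<open>isVF ar Mods t phi\<close> by (rule isVF_subset_Val)
  moreover have "optree M \<in> modal mo phi"
    using CF_mod.prems(1) by blast
  ultimately have "optree N \<in> modal mo (Rv t `` phi)"
    using rel \<open>mo \<in> Mods\<close> unfolding relator_def by blast
  moreover have "Rv t `` phi \<subseteq> phi"
    using CF_mod.IH by blast
  ultimately have "optree N \<in> modal mo phi"
    using up \<open>mo \<in> Mods\<close> modal_mono by blast
  then show ?case
    using N by simp
next
  case (CF_and F t)
  then show ?case
    using sim unfolding app_sim_def by blast
next
  case (CF_or F t)
  then show ?case
    by blast
qed

lemma vsim_imp_log_vle:
  assumes "\<forall>mo\<in>Mods. upclosed_modality ar mo" and "vsim ar Mods t V W"
  shows "log_vle ar Mods t V W"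
  using assms(2) isVF_app_sim_closed[OF _ assms(1)] unfolding vsim_def log_vle_def by blast

lemma csim_imp_log_cle:
  assumes "\<forall>mo\<in>Mods. upclosed_modality ar mo" and "csim ar Mods t M N"
  shows "log_cle ar Mods t M N"
  using assms(2) isCF_app_sim_closed[OF _ assms(1)] unfolding csim_def log_cle_def by blast

definition log_vrel :: "('o \<Rightarrow> arity) \<Rightarrow> ('o, unit) etree set set \<Rightarrow> ty \<Rightarrow> ('o val \<times> 'o val) set" where
  "log_vrel ar Mods t = {(V, W). V \<in> Val ar t \<and> W \<in> Val ar t \<and> log_vle ar Mods t V W}"

definition log_crel :: "('o \<Rightarrow> arity) \<Rightarrow> ('o, unit) etree set set \<Rightarrow> ty \<Rightarrow> ('o comp \<times> 'o comp) set" where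
  "log_crel ar Mods t = {(M, N). M \<in> Com ar t \<and> N \<in> Com ar t \<and> log_cle ar Mods t M N}"

lemma isVF_log_vrel_Image:
  assumes "A \<subseteq> Val ar t"
  shows "isVF ar Mods t (log_vrel ar Mods t `` A)"
proof -
  have "log_vrel ar Mods t `` A = (\<Union>V\<in>A. Val ar t \<inter> \<Inter>{X. isVF ar Mods t X \<and> V \<in> X})"
    using assms by (auto simp: log_vrel_def log_vle_def)
  also have "isVF ar Mods t \<dots>"
    by (blast intro: VF_or VF_and)
  finally show ?thesis .
qed

lemma log_vle_TNat_eq:
  assumes "V \<in> Val ar TNat" and "log_vle ar Mods TNat V W"
  shows "V = W"
  using assms Val_TNat_num VF_num unfolding log_vle_def by blast

lemma log_vle_App:
  assumes "V \<in> Val ar (TArr t' t)" and "log_vle ar Mods (TArr t' t) V W" and "U \<in> Val ar t'"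
  shows "log_cle ar Mods t (App V U) (App W U)"
  unfolding log_cle_def
proof (intro allI impI)
  fix X
  assume "isCF ar Mods t X" and "App V U \<in> X"
  then show "App W U \<in> X"
    using assms VF_app[OF assms(3) \<open>isCF ar Mods t X\<close>] unfolding log_vle_def by blast
qed

lemma log_cle_relator:
  assumes up: "\<forall>mo\<in>Mods. upclosed_modality ar mo"
    and M: "M \<in> Com ar t" and MN: "log_cle ar Mods t M N"
  shows "relator Mods (Val ar t) (log_vrel ar Mods t) (optree M) (optree N)"
  unfolding relator_def
proof (intro allI impI ballI)
  fix A mo
  assume A: "A \<subseteq> Val ar t" and mo: "mo \<in> Mods" and "optree M \<in> modal mo A"
  moreover have "A \<subseteq> log_vrel ar Mods t `` A"
    using A by (auto simp: log_vrel_def log_vle_def)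
  ultimately have "optree M \<in> modal mo (log_vrel ar Mods t `` A)"
    using up modal_mono by blast
  moreover have "isCF ar Mods t {M \<in> Com ar t. optree M \<in> modal mo (log_vrel ar Mods t `` A)}"
    using mo isVF_log_vrel_Image[OF A] by (rule CF_mod)
  ultimately show "optree N \<in> modal mo (log_vrel ar Mods t `` A)"
    using M MN unfolding log_cle_def by blast
qed

lemma app_sim_log_rel:
  assumes "\<forall>mo\<in>Mods. upclosed_modality ar mo"
  shows "app_sim ar Mods (log_vrel ar Mods) (log_crel ar Mods)"
  unfolding app_sim_def
proof (intro conjI allI impI ballI)
  fix t' t V W U
  assume "(V, W) \<in> log_vrel ar Mods (TArr t' t)" and U: "U \<in> Val ar t'"
  then have "V \<in> Val ar (TArr t' t)" "W \<in> Val ar (TArr t' t)" "log_vle ar Mods (TArr t' t) V W"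
    by (auto simp: log_vrel_def)
  moreover from this have "App V U \<in> Com ar t" "App W U \<in> Com ar t"
    using U by (auto simp: Val_def Com_def intro: vtyp_ctyp.intros(6))
  ultimately show "(App V U, App W U) \<in> log_crel ar Mods t"
    using U log_vle_App by (auto simp: log_crel_def)
qed (use assms log_vle_TNat_eq log_cle_relator in \<open>auto simp: log_vrel_def log_crel_def\<close>)

theorem theorem2:
  fixes ar :: "'o \<Rightarrow> arity"
    and Mods :: "('o, unit) etree set set"
  assumes "\<forall>mo\<in>Mods. upclosed_modality ar mo"
  shows "(\<forall>t V W. V \<in> Val ar t \<longrightarrow> W \<in> Val ar t \<longrightarrow> (log_vle ar Mods t V W \<longleftrightarrow> vsim ar Mods t V W))
       \<and> (\<forall>t M N. M \<in> Com ar t \<longrightarrow> N \<in> Com ar t \<longrightarrow> (log_cle ar Mods t M N \<longleftrightarrow> csim ar Mods t M N))"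
  using app_sim_log_rel[OF assms] vsim_imp_log_vle[OF assms] csim_imp_log_cle[OF assms]
  unfolding vsim_def csim_def log_vrel_def log_crel_def by blast

end
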